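(* Assume Assumptions 1 and 2 and Assumption 3 hold, and that the propensity scores are fully known, i.e. $e_0(X)=e_X(X;\alpha^* )=e_W(X,W;\alpha^*,\gamma^* )$. Then $\Sigma^{\mathrm{fps}}_W(\delta^{\mathrm{fps}})\le\Sigma^{\mathrm{fps}}_X(\beta^{\mathrm{fps}})$.
   Context: Data: i.i.d. copies of $(Y,Z,X,W)$, binary treatment $Z$, covariates $X,W$, outcome $Y=ZY_1+(1-Z)Y_0$ with potential outcomes $Y_1,Y_0$; $\tau=E(Y_1-Y_0)$. Assumption 1: $Z\perp(Y_0,Y_1)\mid X$, $0<\Pr(Z=1\mid X)<1$. Assumption 2: $Z\perp(W,Y_0,Y_1)\mid X$. $e_0(X)=\Pr(Z=1\mid X)$ (which also equals $\Pr(Z=1\mid X,W)$). Propensity models $e_X(X;\alpha)$ and $e_W(X,W;\alpha,\gamma)$ with $e_W(X,W;\alpha,0)=e_X(X;\alpha)$. Outcome working models $Q_X(X,z;\beta)$ for $E(Y\mid X,Z=z)$ and $Q_W(X,W,z;\delta)$ for $Q_0(X,W,z)=E(Y\mid X,W,Z=z)$. Assumption 3: either (i) $Q_X$ is covered by $Q_W$: for each $\beta$, the vector $\delta=(\beta^T,0^T)^T$ (appending zeros for the $W$-related parameters) satisfies $Q_W(X,W,z;\delta)=Q_X(X,z;\beta)$ (e.g. $Q_X=\beta_0+\beta_1Z+\beta_2^TX+\beta_3^TZX$, $Q_W=\delta_0+\delta_1Z+\delta_2^TX+\delta_3^TZX+\delta_4^TW+\delta_5^TZW$); or (ii) $Q_W$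 is correctly specified, i.e. $Q_W(X,W,z;\delta_0)=Q_0(X,W,z)$ for some $\delta_0$. Define $\varphi_X(Y,X,Z;\beta)=\frac{ZY}{e_0(X)}-\frac{(1-Z)Y}{1-e_0(X)}-\frac{Z-e_0(X)}{e_0(X)}Q_X(X,1;\beta)+\frac{e_0(X)-Z}{1-e_0(X)}Q_X(X,0;\beta)-\tau$ and $\varphi_W$ analogously with $Q_W(X,W,z;\delta)$ in place of $Q_X(X,z;\beta)$. Let $\Sigma^{\mathrm{fps}}_X(\beta)=\mathrm{var}\{\varphi_X(Y,X,Z;\beta)\}$ and $\Sigma^{\mathrm{fps}}_W(\delta)=\mathrm{var}\{\varphi_W(Y,X,W,Z;\delta)\}$ (these are the asymptotic variances of the doubly robust estimators with known propensity score and outcome parameter estimates converging to $\beta$, resp. $\delta$), and let $\beta^{\mathrm{fps}}$, $\delta^{\mathrm{fps}}$ be their minimizers. *)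

theory Defs
  imports "HOL-Probability.Probability"
begin

definition gen_sigma :: "'w measure \<Rightarrow> ('w \<Rightarrow> 'a) \<Rightarrow> 'a measure \<Rightarrow> 'w measure" where
  "gen_sigma M V MV = vimage_algebra (space M) V MV"

definition cond_indep ::
  "'w measure \<Rightarrow> ('w \<Rightarrow> 'x) \<Rightarrow> 'x measure \<Rightarrow> ('w \<Rightarrow> 'a) \<Rightarrow> 'a measure
     \<Rightarrow> ('w \<Rightarrow> 'b) \<Rightarrow> 'b measure \<Rightarrow> bool" where
  "cond_indep M V MV A MA B MB \<longleftrightarrow>
     (\<forall>SA\<in>sets MA. \<forall>SB\<in>sets MB. AE \<omega> in M.
        real_cond_exp M (gen_sigma M V MV)
          (\<lambda>u. indicator (A -` SA \<inter> space M) u * indicator (B -` SB \<inter> space M) u) \<omega>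
        = real_cond_exp M (gen_sigma M V MV) (indicator (A -` SA \<inter> space M)) \<omega>
          * real_cond_exp M (gen_sigma M V MV) (indicator (B -` SB \<inter> space M)) \<omega>)"

definition var_rv :: "'w measure \<Rightarrow> ('w \<Rightarrow> real) \<Rightarrow> real" where
  "var_rv M f = (\<integral>\<omega>. (f \<omega> - (\<integral>u. f u \<partial>M))\<^sup>2 \<partial>M)"

definition aipw :: "real \<Rightarrow> real \<Rightarrow> real \<Rightarrow> real \<Rightarrow> real \<Rightarrow> real \<Rightarrow> real" where
  "aipw e z y q1 q0 tau =
     z * y / e - (1 - z) * y / (1 - e) - (z - e) / e * q1 + (e - z) / (1 - e) * q0 - tau"

end

theory Submission
  imports Defs
begin

(* With the true propensity score e = e0(X) in both influence functions, replacing the outcome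
   model Q by P adds the term (e - Z) g(X, W) with g = (P1 - Q1)/e + (P0 - Q0)/(1 - e).
   Assumption 2 gives E(Z | X, W) = e, so this term is centred and orthogonal to every
   square-integrable function of (X, W).  If Q is the true regression E(Y | X, W, Z), the
   influence function is a function of (X, W) plus (Y - Q)(Z/e - (1 - Z)/(1 - e)), which is
   orthogonal to every square-integrable function of (X, W, Z).  Hence a correctly specified Q_W(.; delta0)
   has variance at most that of any outcome model in (X, W), in particular Q_X(.; beta_fps), and
   delta_fps does at least as well as delta0.  Under Assumption 3(i), Q_X(.; beta_fps) is itself
   one of the Q_W models. *)

lemma integrable_mult_of_square_integrable:
  fixes f g :: "'a \<Rightarrow> real"
  assumes [measurable]: "f \<in> borel_measurable M" "g \<in> borel_measurable M"
    and "integrable M (\<lambda>x. (f x)\<^sup>2)" "integrable M (\<lambda>x. (g x)\<^sup>2)"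
  shows "integrable M (\<lambda>x. f x * g x)"
proof (rule Bochner_Integration.integrable_bound)
  show "integrable M (\<lambda>x. (f x)\<^sup>2 + (g x)\<^sup>2)"
    using assms by simp
  show "AE x in M. norm (f x * g x) \<le> norm ((f x)\<^sup>2 + (g x)\<^sup>2)"
  proof (intro AE_I2)
    fix x
    have "\<bar>f x\<bar> * \<bar>g x\<bar> \<le> 2 * \<bar>f x\<bar> * \<bar>g x\<bar>"
      by simp
    also have "\<dots> \<le> \<bar>f x\<bar>\<^sup>2 + \<bar>g x\<bar>\<^sup>2"
      by (rule sum_squares_bound)
    finally show "norm (f x * g x) \<le> norm ((f x)\<^sup>2 + (g x)\<^sup>2)"
      by (simp add: abs_mult)
  qed
qed simp

lemma square_integrable_add:
  fixes f g :: "'a \<Rightarrow> real"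
  assumes "f \<in> borel_measurable M" "g \<in> borel_measurable M"
    and "integrable M (\<lambda>x. (f x)\<^sup>2)" "integrable M (\<lambda>x. (g x)\<^sup>2)"
  shows "integrable M (\<lambda>x. (f x + g x)\<^sup>2)"
proof -
  have "integrable M (\<lambda>x. (f x)\<^sup>2 + (g x)\<^sup>2 + 2 * (f x * g x))"
    using integrable_mult_of_square_integrable[OF assms] assms(3,4) by simp
  then show ?thesis
    by (simp add: power2_sum mult.assoc)
qed

lemma var_rv_nonneg: "0 \<le> var_rv M f"
  unfolding var_rv_def by simp

lemma (in prob_space) var_rv_le_add_orthogonal:
  fixes A D :: "'a \<Rightarrow> real"
  assumes [measurable]: "A \<in> borel_measurable M" "D \<in> borel_measurable M"
    and D_sq: "integrable M (\<lambda>\<omega>. (D \<omega>)\<^sup>2)" and D_mean: "(\<integral>\<omega>. D \<omega> \<partial>M) = 0"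
    and orthogonal: "integrable M (\<lambda>\<omega>. (A \<omega>)\<^sup>2) \<Longrightarrow> (\<integral>\<omega>. A \<omega> * D \<omega> \<partial>M) = 0"
  shows "var_rv M A \<le> var_rv M (\<lambda>\<omega>. A \<omega> + D \<omega>)"
proof (cases "integrable M (\<lambda>\<omega>. (A \<omega>)\<^sup>2)")
  case True
  have A: "integrable M A" and D: "integrable M D"
    using True D_sq by (simp_all add: square_integrable_imp_integrable)
  have AD: "integrable M (\<lambda>\<omega>. A \<omega> * D \<omega>)"
    using True D_sq by (simp add: integrable_mult_of_square_integrable)
  define m where "m = (\<integral>\<omega>. A \<omega> \<partial>M)"
  have mean: "(\<integral>\<omega>. A \<omega> + D \<omega> \<partial>M) = m"
    using A D D_mean by (simp add: m_def)
  have centred: "integrable M (\<lambda>\<omega>. (A \<omega> - m)\<^sup>2)"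
    using True A by (simp add: power2_diff)
  have "(\<lambda>\<omega>. (A \<omega> + D \<omega> - m)\<^sup>2)
      = (\<lambda>\<omega>. (A \<omega> - m)\<^sup>2 + 2 * (A \<omega> * D \<omega>) - 2 * m * D \<omega> + (D \<omega>)\<^sup>2)"
    by (auto simp: power2_eq_square algebra_simps)
  then have "var_rv M (\<lambda>\<omega>. A \<omega> + D \<omega>) = var_rv M A + (\<integral>\<omega>. (D \<omega>)\<^sup>2 \<partial>M)"
    unfolding var_rv_def mean using centred AD D D_sq D_mean orthogonal[OF True]
    by (simp add: m_def)
  then show ?thesis
    by simp
next
  case False
  (* then no (A - c)^2 is integrable, so var_rv M A is the junk value 0 *)
  have "\<not> integrable M (\<lambda>\<omega>. (A \<omega> - c)\<^sup>2)" for c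
  proof
    assume "integrable M (\<lambda>\<omega>. (A \<omega> - c)\<^sup>2)"
    then have "integrable M (\<lambda>\<omega>. (A \<omega> - c + c)\<^sup>2)"
      by (intro square_integrable_add) auto
    with False show False
      by simp
  qed
  then have "var_rv M A = 0"
    unfolding var_rv_def by (simp add: not_integrable_integral_eq)
  then show ?thesis
    using var_rv_nonneg by metis
qed

lemma measurable_gen_sigma:
  assumes "V \<in> measurable M MV"
  shows "V \<in> measurable (gen_sigma M V MV) MV"
  unfolding gen_sigma_def
  by (rule measurable_vimage_algebra1) (use measurable_space[OF assms] in blast)

lemma (in prob_space) sigma_finite_subalgebra_gen_sigma:
  assumes "V \<in> measurable M MV"
  shows "sigma_finite_subalgebra M (gen_sigma M V MV)"
proof -
  have "subalgebra M (gen_sigma M V MV)"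
    unfolding subalgebra_def gen_sigma_def
    using sets_image_in_sets[OF refl assms] by simp
  then have "finite_measure_subalgebra M (gen_sigma M V MV)"
    by (simp add: finite_measure_subalgebra_def finite_measure_subalgebra_axioms_def finite_measure_axioms)
  then show ?thesis
    by (rule finite_measure_subalgebra_is_sigma_finite)
qed

lemma cond_indep_fst:
  assumes "cond_indep M V MV A MA (\<lambda>\<omega>. (B \<omega>, C \<omega>)) (MB \<Otimes>\<^sub>M MC)"
    and "C \<in> measurable M MC"
  shows "cond_indep M V MV A MA B MB"
  unfolding cond_indep_def
proof (intro ballI)
  fix SA SB
  assume SA: "SA \<in> sets MA" and SB: "SB \<in> sets MB"
  have preimage: "(\<lambda>\<omega>. (B \<omega>, C \<omega>)) -` (SB \<times> space MC) \<inter> space M = B -` SB \<inter> space M"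
    using measurable_space[OF assms(2)] by auto
  have "SB \<times> space MC \<in> sets (MB \<Otimes>\<^sub>M MC)"
    using SB by (intro pair_measureI) auto
  with assms(1) SA show "AE \<omega> in M.
      real_cond_exp M (gen_sigma M V MV)
        (\<lambda>u. indicator (A -` SA \<inter> space M) u * indicator (B -` SB \<inter> space M) u) \<omega>
      = real_cond_exp M (gen_sigma M V MV) (indicator (A -` SA \<inter> space M)) \<omega>
        * real_cond_exp M (gen_sigma M V MV) (indicator (B -` SB \<inter> space M)) \<omega>"
    unfolding cond_indep_def preimage[symmetric] by blast
qed

lemma (in sigma_finite_subalgebra) integral_mult_cond_exp_residual:
  fixes Y h :: "'a \<Rightarrow> real"
  assumes Y: "integrable M Y" and h [measurable]: "h \<in> borel_measurable F"
    and hY: "integrable M (\<lambda>\<omega>. h \<omega> * (Y \<omega> - real_cond_exp M F Y \<omega>))"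
  shows "(\<integral>\<omega>. h \<omega> * (Y \<omega> - real_cond_exp M F Y \<omega>) \<partial>M) = 0"
proof -
  have [measurable]: "Y \<in> borel_measurable M" "real_cond_exp M F Y \<in> borel_measurable M"
    using Y by (auto intro: borel_measurable_cond_exp2)
  have [measurable]: "h \<in> borel_measurable M"
    using measurable_from_subalg[OF subalg h] .
  have residual: "AE \<omega> in M. real_cond_exp M F (\<lambda>u. Y u - real_cond_exp M F Y u) \<omega> = 0"
  proof -
    have "AE \<omega> in M. real_cond_exp M F (\<lambda>u. Y u - real_cond_exp M F Y u) \<omega>
        = real_cond_exp M F Y \<omega> - real_cond_exp M F (real_cond_exp M F Y) \<omega>"
      using Y by (intro real_cond_exp_diff) auto
    moreover have "AE \<omega> in M. real_cond_exp M F (real_cond_exp M F Y) \<omega> = real_cond_exp M F Y \<omega>"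
      using Y by (intro real_cond_exp_F_meas) auto
    ultimately show ?thesis
      by eventually_elim simp
  qed
  have "(\<integral>\<omega>. h \<omega> * (Y \<omega> - real_cond_exp M F Y \<omega>) \<partial>M)
      = (\<integral>\<omega>. h \<omega> * real_cond_exp M F (\<lambda>u. Y u - real_cond_exp M F Y u) \<omega> \<partial>M)"
    using hY by (intro real_cond_exp_intg(2)[symmetric]) auto
  also have "\<dots> = (\<integral>\<omega>. 0 \<partial>M)"
    using residual by (intro integral_cong_AE) (auto intro: borel_measurable_cond_exp2)
  finally show ?thesis
    by simp
qed

lemma emeasure_distr_density_rectangle:
  fixes g :: "'a \<Rightarrow> real"
  assumes [measurable]: "X \<in> measurable M MX" "W \<in> measurable M MW" "g \<in> borel_measurable M"
    and nonneg: "AE \<omega> in M. 0 \<le> g \<omega>" and g: "integrable M g"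
    and [measurable]: "C \<in> sets MX" "B \<in> sets MW"
  shows "emeasure (distr (density M g) (MX \<Otimes>\<^sub>M MW) (\<lambda>\<omega>. (X \<omega>, W \<omega>))) (C \<times> B)
       = ennreal (\<integral>\<omega>. g \<omega> * indicator C (X \<omega>) * indicator B (W \<omega>) \<partial>M)"
proof -
  have "emeasure (distr (density M g) (MX \<Otimes>\<^sub>M MW) (\<lambda>\<omega>. (X \<omega>, W \<omega>))) (C \<times> B)
      = (\<integral>\<^sup>+\<omega>. ennreal (g \<omega>) * indicator ((\<lambda>\<omega>. (X \<omega>, W \<omega>)) -` (C \<times> B) \<inter> space M) \<omega> \<partial>M)"
    by (simp add: emeasure_distr emeasure_density)
  also have "\<dots> = (\<integral>\<^sup>+\<omega>. ennreal (g \<omega> * indicator C (X \<omega>) * indicator B (W \<omega>)) \<partial>M)"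
    by (intro nn_integral_cong) (auto split: split_indicator)
  also have "\<dots> = ennreal (\<integral>\<omega>. g \<omega> * indicator C (X \<omega>) * indicator B (W \<omega>) \<partial>M)"
    using nonneg
    by (intro nn_integral_eq_integral Bochner_Integration.integrable_bound[OF g])
      (auto elim!: eventually_mono split: split_indicator)
  finally show ?thesis .
qed

lemma distr_density_pair_eqI:
  fixes f h :: "'a \<Rightarrow> real"
  assumes [measurable]: "X \<in> measurable M MX" "W \<in> measurable M MW"
    "f \<in> borel_measurable M" "h \<in> borel_measurable M"
    and "AE \<omega> in M. 0 \<le> f \<omega>" "AE \<omega> in M. 0 \<le> h \<omega>" "integrable M f" "integrable M h"
    and rectangle: "\<And>C B. C \<in> sets MX \<Longrightarrow> B \<in> sets MW \<Longrightarrow>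
        (\<integral>\<omega>. f \<omega> * indicator C (X \<omega>) * indicator B (W \<omega>) \<partial>M)
      = (\<integral>\<omega>. h \<omega> * indicator C (X \<omega>) * indicator B (W \<omega>) \<partial>M)"
  shows "distr (density M f) (MX \<Otimes>\<^sub>M MW) (\<lambda>\<omega>. (X \<omega>, W \<omega>))
       = distr (density M h) (MX \<Otimes>\<^sub>M MW) (\<lambda>\<omega>. (X \<omega>, W \<omega>))"
  (is "?Nf = ?Nh")
proof (rule measure_eqI_generator_eq[OF Int_stable_pair_measure_generator pair_measure_closed])
  show "sets ?Nf = sigma_sets (space MX \<times> space MW) {a \<times> b |a b. a \<in> sets MX \<and> b \<in> sets MW}"
    "sets ?Nh = sigma_sets (space MX \<times> space MW) {a \<times> b |a b. a \<in> sets MX \<and> b \<in> sets MW}"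
    by (simp_all add: sets_pair_measure)
  show "emeasure ?Nf S = emeasure ?Nh S" if "S \<in> {a \<times> b |a b. a \<in> sets MX \<and> b \<in> sets MW}" for S
    using that assms by (auto simp: emeasure_distr_density_rectangle)
  show "range (\<lambda>i::nat. space MX \<times> space MW) \<subseteq> {a \<times> b |a b. a \<in> sets MX \<and> b \<in> sets MW}"
    "(\<Union>i. space MX \<times> space MW) = space MX \<times> space MW"
    by auto
  show "emeasure ?Nf (space MX \<times> space MW) \<noteq> \<infinity>" for i :: nat
    using assms by (simp add: emeasure_distr_density_rectangle)
qed

lemma
  fixes f h :: "'a \<Rightarrow> real"
  assumes [measurable]: "X \<in> measurable M MX" "W \<in> measurable M MW"
    "f \<in> borel_measurable M" "h \<in> borel_measurable M"
    and f_nonneg: "AE \<omega> in M. 0 \<le> f \<omega>" and h_nonneg: "AE \<omega> in M. 0 \<le> h \<omega>"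
    and "integrable M f" "integrable M h"
    and rectangle: "\<And>C B. C \<in> sets MX \<Longrightarrow> B \<in> sets MW \<Longrightarrow>
        (\<integral>\<omega>. f \<omega> * indicator C (X \<omega>) * indicator B (W \<omega>) \<partial>M)
      = (\<integral>\<omega>. h \<omega> * indicator C (X \<omega>) * indicator B (W \<omega>) \<partial>M)"
    and [measurable]: "k \<in> borel_measurable (MX \<Otimes>\<^sub>M MW)"
  shows integrable_density_pair_transfer:
      "integrable M (\<lambda>\<omega>. f \<omega> * k (X \<omega>, W \<omega>)) \<longleftrightarrow> integrable M (\<lambda>\<omega>. h \<omega> * k (X \<omega>, W \<omega>))"
    and integral_density_pair_transfer:
      "(\<integral>\<omega>. f \<omega> * k (X \<omega>, W \<omega>) \<partial>M) = (\<integral>\<omega>. h \<omega> * k (X \<omega>, W \<omega>) \<partial>M)"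
proof -
  have distr_eq: "distr (density M f) (MX \<Otimes>\<^sub>M MW) (\<lambda>\<omega>. (X \<omega>, W \<omega>))
      = distr (density M h) (MX \<Otimes>\<^sub>M MW) (\<lambda>\<omega>. (X \<omega>, W \<omega>))"
    by (rule distr_density_pair_eqI[OF assms(1-8)]) (fact rectangle)
  have "integrable M (\<lambda>\<omega>. f \<omega> * k (X \<omega>, W \<omega>))
      \<longleftrightarrow> integrable (distr (density M f) (MX \<Otimes>\<^sub>M MW) (\<lambda>\<omega>. (X \<omega>, W \<omega>))) k"
    by (simp add: integrable_distr_eq integrable_density f_nonneg)
  also have "\<dots> \<longleftrightarrow> integrable M (\<lambda>\<omega>. h \<omega> * k (X \<omega>, W \<omega>))"
    unfolding distr_eq by (simp add: integrable_distr_eq integrable_density h_nonneg)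
  finally show "integrable M (\<lambda>\<omega>. f \<omega> * k (X \<omega>, W \<omega>)) \<longleftrightarrow> integrable M (\<lambda>\<omega>. h \<omega> * k (X \<omega>, W \<omega>))" .
  have "(\<integral>\<omega>. f \<omega> * k (X \<omega>, W \<omega>) \<partial>M)
      = integral\<^sup>L (distr (density M f) (MX \<Otimes>\<^sub>M MW) (\<lambda>\<omega>. (X \<omega>, W \<omega>))) k"
    by (simp add: integral_distr integral_density f_nonneg)
  also have "\<dots> = (\<integral>\<omega>. h \<omega> * k (X \<omega>, W \<omega>) \<partial>M)"
    unfolding distr_eq by (simp add: integral_distr integral_density h_nonneg)
  finally show "(\<integral>\<omega>. f \<omega> * k (X \<omega>, W \<omega>) \<partial>M) = (\<integral>\<omega>. h \<omega> * k (X \<omega>, W \<omega>) \<partial>M)" .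
qed

lemma aipw_change_outcome:
  "aipw e z y a1 a0 t = aipw e z y c1 c0 t + (e - z) * ((a1 - c1) / e + (a0 - c0) / (1 - e))"
  unfolding aipw_def by (simp add: diff_divide_distrib add_divide_distrib algebra_simps)

lemma aipw_residual_form:
  assumes "e \<noteq> 0" "e \<noteq> 1"
  shows "aipw e z y c1 c0 t = z * (y - c1) / e - (1 - z) * (y - c0) / (1 - e) + (c1 - c0) - t"
proof -
  have treated: "(z - e) / e = z / e - 1"
    using assms(1) by (simp add: diff_divide_distrib)
  have control: "(e - z) / (1 - e) = (1 - z) / (1 - e) - 1"
    using assms(2) by (simp add: field_simps)
  show ?thesis
    unfolding aipw_def treated control by (simp add: divide_inverse algebra_simps)
qed

lemma propensity_weighted_square_le:
  fixes e a b :: real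
  assumes "0 < e" "e < 1"
  shows "e * (1 - e) * (a / e + b / (1 - e))\<^sup>2 \<le> (a\<^sup>2 + b\<^sup>2) / (e * (1 - e))"
proof -
  have "a / e + b / (1 - e) = ((1 - e) * a + e * b) / (e * (1 - e))"
    using assms by (simp add: field_simps)
  then have "e * (1 - e) * (a / e + b / (1 - e))\<^sup>2 = ((1 - e) * a + e * b)\<^sup>2 / (e * (1 - e))"
    using assms by (simp add: power_divide power2_eq_square)
  moreover have "((1 - e) * a + e * b)\<^sup>2 \<le> (1 - e) * a\<^sup>2 + e * b\<^sup>2"
  proof -
    have "(1 - e) * a\<^sup>2 + e * b\<^sup>2 - ((1 - e) * a + e * b)\<^sup>2 = e * (1 - e) * (a - b)\<^sup>2"
      by (simp add: power2_eq_square algebra_simps)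
    moreover have "0 \<le> e * (1 - e) * (a - b)\<^sup>2"
      using assms by simp
    ultimately show ?thesis
      by linarith
  qed
  moreover have "(1 - e) * a\<^sup>2 + e * b\<^sup>2 \<le> a\<^sup>2 + b\<^sup>2"
    using assms by (intro add_mono mult_left_le_one_le) auto
  ultimately show ?thesis
    using assms by (simp add: divide_right_mono)
qed

lemma propensity_weighted_square_diff_le:
  fixes e a1 c1 a0 c0 :: real
  assumes "0 < e" "e < 1"
  shows "e * (1 - e) * ((a1 - c1) / e + (a0 - c0) / (1 - e))\<^sup>2
       \<le> 2 * (a1\<^sup>2 + c1\<^sup>2 + a0\<^sup>2 + c0\<^sup>2) / (e * (1 - e))"
proof -
  have "(a1 - c1)\<^sup>2 + (a0 - c0)\<^sup>2 \<le> 2 * (a1\<^sup>2 + c1\<^sup>2 + a0\<^sup>2 + c0\<^sup>2)"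
    using zero_le_power2[of "a1 + c1"] zero_le_power2[of "a0 + c0"]
    by (simp add: power2_eq_square algebra_simps)
  then have "((a1 - c1)\<^sup>2 + (a0 - c0)\<^sup>2) / (e * (1 - e)) \<le> 2 * (a1\<^sup>2 + c1\<^sup>2 + a0\<^sup>2 + c0\<^sup>2) / (e * (1 - e))"
    using assms by (intro divide_right_mono) auto
  with propensity_weighted_square_le[OF assms] show ?thesis
    by (rule order_trans)
qed

locale treatment_model = prob_space M
  for M :: "'w measure"
    and X :: "'w \<Rightarrow> 'x" and MX :: "'x measure"
    and W :: "'w \<Rightarrow> 'v" and MW :: "'v measure"
    and Z :: "'w \<Rightarrow> real" and e0 :: "'x \<Rightarrow> real" +
  assumes measurable_X [measurable]: "X \<in> measurable M MX"
    and measurable_W [measurable]: "W \<in> measurable M MW"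
    and measurable_Z [measurable]: "Z \<in> borel_measurable M"
    and measurable_e0 [measurable]: "e0 \<in> borel_measurable MX"
    and Z_binary: "\<And>\<omega>. \<omega> \<in> space M \<Longrightarrow> Z \<omega> = 0 \<or> Z \<omega> = 1"
    and propensity: "AE \<omega> in M. real_cond_exp M (gen_sigma M X MX) Z \<omega> = e0 (X \<omega>)"
    and overlap: "AE \<omega> in M. 0 < e0 (X \<omega>) \<and> e0 (X \<omega>) < 1"
    and unconfounded: "cond_indep M X MX Z borel W MW"
begin

lemma measurable_case_prod_XW:
  assumes "(\<lambda>(x, w). f x w) \<in> borel_measurable (MX \<Otimes>\<^sub>M MW)"
  shows "(\<lambda>p. f (fst p) (snd p)) \<in> borel_measurable (MX \<Otimes>\<^sub>M MW)"
    and "(\<lambda>\<omega>. f (X \<omega>) (W \<omega>)) \<in> borel_measurable M"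
  using assms measurable_compose[OF measurable_Pair[OF measurable_X measurable_W] assms]
  by (simp_all add: case_prod_beta')

lemma integrable_Z: "integrable M Z"
  by (intro integrable_const_bound[where B = 1] AE_I2) (auto dest: Z_binary)

lemma integrable_e0: "integrable M (\<lambda>\<omega>. e0 (X \<omega>))"
proof -
  interpret sigma_finite_subalgebra M "gen_sigma M X MX"
    by (rule sigma_finite_subalgebra_gen_sigma[OF measurable_X])
  show ?thesis
    by (rule integrable_cong_AE_imp[OF real_cond_exp_int(1)[OF integrable_Z] _ propensity]) simp
qed

lemma integral_Z_rectangle:
  assumes [measurable]: "C \<in> sets MX" "B \<in> sets MW"
  shows "(\<integral>\<omega>. Z \<omega> * indicator C (X \<omega>) * indicator B (W \<omega>) \<partial>M)
       = (\<integral>\<omega>. e0 (X \<omega>) * indicator C (X \<omega>) * indicator B (W \<omega>) \<partial>M)"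
proof -
  define F where "F = gen_sigma M X MX"
  interpret F: sigma_finite_subalgebra M F
    unfolding F_def by (rule sigma_finite_subalgebra_gen_sigma[OF measurable_X])
  have [measurable]: "X \<in> measurable F MX"
    unfolding F_def by (rule measurable_gen_sigma[OF measurable_X])
  define IZ :: "'w \<Rightarrow> real" where "IZ = indicator (Z -` {1} \<inter> space M)"
  define IW :: "'w \<Rightarrow> real" where "IW = indicator (W -` B \<inter> space M)"
  have [measurable]: "IZ \<in> borel_measurable M" "IW \<in> borel_measurable M"
    unfolding IZ_def IW_def by measurable
  have factorise: "AE \<omega> in M. real_cond_exp M F (\<lambda>u. IZ u * IW u) \<omega>
      = real_cond_exp M F IZ \<omega> * real_cond_exp M F IW \<omega>"
    using unconfounded unfolding cond_indep_def F_def IZ_def IW_def by auto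
  have "AE \<omega> in M. real_cond_exp M F IZ \<omega> = real_cond_exp M F Z \<omega>"
    using Z_binary by (intro F.real_cond_exp_cong) (auto simp: IZ_def split: split_indicator)
  with propensity have IZ_propensity: "AE \<omega> in M. real_cond_exp M F IZ \<omega> = e0 (X \<omega>)"
    unfolding F_def by eventually_elim simp
  have "(\<integral>\<omega>. Z \<omega> * indicator C (X \<omega>) * indicator B (W \<omega>) \<partial>M)
      = (\<integral>\<omega>. indicator C (X \<omega>) * (IZ \<omega> * IW \<omega>) \<partial>M)"
    using Z_binary by (intro Bochner_Integration.integral_cong)
      (auto simp: IZ_def IW_def split: split_indicator)
  also have "\<dots> = (\<integral>\<omega>. indicator C (X \<omega>) * real_cond_exp M F (\<lambda>u. IZ u * IW u) \<omega> \<partial>M)"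
    by (intro F.real_cond_exp_intg(2)[symmetric] integrable_const_bound[where B = 1])
      (auto simp: IZ_def IW_def split: split_indicator)
  also have "\<dots> = (\<integral>\<omega>. (indicator C (X \<omega>) * e0 (X \<omega>)) * real_cond_exp M F IW \<omega> \<partial>M)"
    using factorise IZ_propensity by (intro integral_cong_AE) (auto elim: eventually_elim2)
  also have "\<dots> = (\<integral>\<omega>. (indicator C (X \<omega>) * e0 (X \<omega>)) * IW \<omega> \<partial>M)"
    by (intro F.real_cond_exp_intg(2) Bochner_Integration.integrable_bound[OF integrable_e0])
      (auto simp: IW_def split: split_indicator)
  also have "\<dots> = (\<integral>\<omega>. e0 (X \<omega>) * indicator C (X \<omega>) * indicator B (W \<omega>) \<partial>M)"
    by (intro Bochner_Integration.integral_cong) (auto simp: IW_def split: split_indicator)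
  finally show ?thesis .
qed

lemma integral_control_rectangle:
  assumes [measurable]: "C \<in> sets MX" "B \<in> sets MW"
  shows "(\<integral>\<omega>. (1 - Z \<omega>) * indicator C (X \<omega>) * indicator B (W \<omega>) \<partial>M)
       = (\<integral>\<omega>. (1 - e0 (X \<omega>)) * indicator C (X \<omega>) * indicator B (W \<omega>) \<partial>M)"
proof -
  have rectangle: "integrable M (\<lambda>\<omega>. indicator C (X \<omega>) * indicator B (W \<omega>) :: real)"
    by (intro integrable_const_bound[where B = 1]) (auto split: split_indicator)
  have "integrable M (\<lambda>\<omega>. f \<omega> * indicator C (X \<omega>) * indicator B (W \<omega>))"
    if [measurable]: "f \<in> borel_measurable M" and "integrable M f" for f :: "'w \<Rightarrow> real"
    by (intro Bochner_Integration.integrable_bound[OF that(2)]) (auto split: split_indicator)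
  then show ?thesis
    using integral_Z_rectangle[OF assms] rectangle integrable_Z integrable_e0
    by (simp add: left_diff_distrib Bochner_Integration.integral_diff)
qed

lemma
  assumes "k \<in> borel_measurable (MX \<Otimes>\<^sub>M MW)"
  shows integrable_treated_iff:
      "integrable M (\<lambda>\<omega>. Z \<omega> * k (X \<omega>, W \<omega>)) \<longleftrightarrow> integrable M (\<lambda>\<omega>. e0 (X \<omega>) * k (X \<omega>, W \<omega>))"
    and integral_treated:
      "(\<integral>\<omega>. Z \<omega> * k (X \<omega>, W \<omega>) \<partial>M) = (\<integral>\<omega>. e0 (X \<omega>) * k (X \<omega>, W \<omega>) \<partial>M)"
    and integrable_control_iff:
      "integrable M (\<lambda>\<omega>. (1 - Z \<omega>) * k (X \<omega>, W \<omega>))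
        \<longleftrightarrow> integrable M (\<lambda>\<omega>. (1 - e0 (X \<omega>)) * k (X \<omega>, W \<omega>))"
    and integral_control:
      "(\<integral>\<omega>. (1 - Z \<omega>) * k (X \<omega>, W \<omega>) \<partial>M) = (\<integral>\<omega>. (1 - e0 (X \<omega>)) * k (X \<omega>, W \<omega>) \<partial>M)"
proof -
  have Z_nonneg: "AE \<omega> in M. 0 \<le> Z \<omega>" "AE \<omega> in M. 0 \<le> 1 - Z \<omega>"
    by (auto intro!: AE_I2 dest: Z_binary)
  have e0_nonneg: "AE \<omega> in M. 0 \<le> e0 (X \<omega>)" "AE \<omega> in M. 0 \<le> 1 - e0 (X \<omega>)"
    using overlap by (auto elim: eventually_mono)
  show "integrable M (\<lambda>\<omega>. Z \<omega> * k (X \<omega>, W \<omega>)) \<longleftrightarrow> integrable M (\<lambda>\<omega>. e0 (X \<omega>) * k (X \<omega>, W \<omega>))"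
    "(\<integral>\<omega>. Z \<omega> * k (X \<omega>, W \<omega>) \<partial>M) = (\<integral>\<omega>. e0 (X \<omega>) * k (X \<omega>, W \<omega>) \<partial>M)"
    using Z_nonneg e0_nonneg integrable_Z integrable_e0 integral_Z_rectangle assms
    by (intro integrable_density_pair_transfer integral_density_pair_transfer; simp)+
  show "integrable M (\<lambda>\<omega>. (1 - Z \<omega>) * k (X \<omega>, W \<omega>))
        \<longleftrightarrow> integrable M (\<lambda>\<omega>. (1 - e0 (X \<omega>)) * k (X \<omega>, W \<omega>))"
    "(\<integral>\<omega>. (1 - Z \<omega>) * k (X \<omega>, W \<omega>) \<partial>M) = (\<integral>\<omega>. (1 - e0 (X \<omega>)) * k (X \<omega>, W \<omega>) \<partial>M)"
    using Z_nonneg e0_nonneg integrable_Z integrable_e0 integral_control_rectangle assms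
    by (intro integrable_density_pair_transfer integral_density_pair_transfer; simp)+
qed

lemma
  assumes [measurable]: "g \<in> borel_measurable (MX \<Otimes>\<^sub>M MW)"
    and weighted: "integrable M (\<lambda>\<omega>. e0 (X \<omega>) * (1 - e0 (X \<omega>)) * g (X \<omega>, W \<omega>))"
  shows integrable_treatment_residual_mult: "integrable M (\<lambda>\<omega>. (e0 (X \<omega>) - Z \<omega>) * g (X \<omega>, W \<omega>))"
    and integral_treatment_residual_mult: "(\<integral>\<omega>. (e0 (X \<omega>) - Z \<omega>) * g (X \<omega>, W \<omega>) \<partial>M) = 0"
proof -
  define k1 where "k1 p = (e0 (fst p) - 1) * g p" for p
  define k0 where "k0 p = e0 (fst p) * g p" for p
  have [measurable]: "k1 \<in> borel_measurable (MX \<Otimes>\<^sub>M MW)" "k0 \<in> borel_measurable (MX \<Otimes>\<^sub>M MW)"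
    unfolding k1_def k0_def by measurable
  have split: "(e0 (X \<omega>) - Z \<omega>) * g (X \<omega>, W \<omega>)
      = Z \<omega> * k1 (X \<omega>, W \<omega>) + (1 - Z \<omega>) * k0 (X \<omega>, W \<omega>)" for \<omega>
    unfolding k1_def k0_def by (simp add: algebra_simps)
  have cancel: "e0 (X \<omega>) * k1 (X \<omega>, W \<omega>) + (1 - e0 (X \<omega>)) * k0 (X \<omega>, W \<omega>) = 0" for \<omega>
    unfolding k1_def k0_def by (simp add: algebra_simps)
  have "integrable M (\<lambda>\<omega>. - (e0 (X \<omega>) * (1 - e0 (X \<omega>)) * g (X \<omega>, W \<omega>)))"
    using weighted by simp
  then have e0_k1: "integrable M (\<lambda>\<omega>. e0 (X \<omega>) * k1 (X \<omega>, W \<omega>))"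
    unfolding k1_def by (simp add: algebra_simps)
  have e0_k0: "integrable M (\<lambda>\<omega>. (1 - e0 (X \<omega>)) * k0 (X \<omega>, W \<omega>))"
    using weighted unfolding k0_def by (simp add: algebra_simps)
  have Z_k1: "integrable M (\<lambda>\<omega>. Z \<omega> * k1 (X \<omega>, W \<omega>))"
    and Z_k0: "integrable M (\<lambda>\<omega>. (1 - Z \<omega>) * k0 (X \<omega>, W \<omega>))"
    using e0_k1 e0_k0 by (simp_all add: integrable_treated_iff integrable_control_iff)
  then show "integrable M (\<lambda>\<omega>. (e0 (X \<omega>) - Z \<omega>) * g (X \<omega>, W \<omega>))"
    unfolding split by simp
  have "(\<integral>\<omega>. (e0 (X \<omega>) - Z \<omega>) * g (X \<omega>, W \<omega>) \<partial>M)
      = (\<integral>\<omega>. Z \<omega> * k1 (X \<omega>, W \<omega>) \<partial>M) + (\<integral>\<omega>. (1 - Z \<omega>) * k0 (X \<omega>, W \<omega>) \<partial>M)"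
    unfolding split using Z_k1 Z_k0 by simp
  also have "\<dots> = (\<integral>\<omega>. e0 (X \<omega>) * k1 (X \<omega>, W \<omega>) + (1 - e0 (X \<omega>)) * k0 (X \<omega>, W \<omega>) \<partial>M)"
    using e0_k1 e0_k0 by (simp add: integral_treated integral_control)
  finally show "(\<integral>\<omega>. (e0 (X \<omega>) - Z \<omega>) * g (X \<omega>, W \<omega>) \<partial>M) = 0"
    unfolding cancel by simp
qed

lemma square_integrable_treatment_residual:
  assumes [measurable]: "g \<in> borel_measurable (MX \<Otimes>\<^sub>M MW)"
    and weighted: "integrable M (\<lambda>\<omega>. e0 (X \<omega>) * (1 - e0 (X \<omega>)) * (g (X \<omega>, W \<omega>))\<^sup>2)"
  shows "integrable M (\<lambda>\<omega>. ((e0 (X \<omega>) - Z \<omega>) * g (X \<omega>, W \<omega>))\<^sup>2)"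
proof -
  (* for binary Z, ((e0 - Z) g)^2 = Z k1 + (1 - Z) k0 *)
  define k1 where "k1 p = (1 - e0 (fst p))\<^sup>2 * (g p)\<^sup>2" for p
  define k0 where "k0 p = (e0 (fst p))\<^sup>2 * (g p)\<^sup>2" for p
  have [measurable]: "k1 \<in> borel_measurable (MX \<Otimes>\<^sub>M MW)" "k0 \<in> borel_measurable (MX \<Otimes>\<^sub>M MW)"
    unfolding k1_def k0_def by measurable
  have "AE \<omega> in M. norm (e0 (X \<omega>) * k1 (X \<omega>, W \<omega>))
        \<le> norm (e0 (X \<omega>) * (1 - e0 (X \<omega>)) * (g (X \<omega>, W \<omega>))\<^sup>2)
      \<and> norm ((1 - e0 (X \<omega>)) * k0 (X \<omega>, W \<omega>))
        \<le> norm (e0 (X \<omega>) * (1 - e0 (X \<omega>)) * (g (X \<omega>, W \<omega>))\<^sup>2)"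
    using overlap
  proof eventually_elim
    case (elim \<omega>)
    define w where "w = e0 (X \<omega>) * (1 - e0 (X \<omega>)) * (g (X \<omega>, W \<omega>))\<^sup>2"
    have "0 \<le> w"
      using elim by (simp add: w_def)
    moreover have "e0 (X \<omega>) * k1 (X \<omega>, W \<omega>) = (1 - e0 (X \<omega>)) * w"
      "(1 - e0 (X \<omega>)) * k0 (X \<omega>, W \<omega>) = e0 (X \<omega>) * w"
      by (simp_all add: k1_def k0_def w_def power2_eq_square)
    ultimately show ?case
      using elim unfolding w_def[symmetric] by (simp add: abs_mult mult_left_le_one_le)
  qed
  then have "integrable M (\<lambda>\<omega>. e0 (X \<omega>) * k1 (X \<omega>, W \<omega>))"
    "integrable M (\<lambda>\<omega>. (1 - e0 (X \<omega>)) * k0 (X \<omega>, W \<omega>))"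
    by (auto intro!: Bochner_Integration.integrable_bound[OF weighted] elim: eventually_mono)
  then have "integrable M (\<lambda>\<omega>. Z \<omega> * k1 (X \<omega>, W \<omega>) + (1 - Z \<omega>) * k0 (X \<omega>, W \<omega>))"
    by (simp add: integrable_treated_iff integrable_control_iff)
  then show ?thesis
    by (rule integrable_cong_AE_imp)
      (auto intro!: AE_I2 dest: Z_binary simp: k1_def k0_def power2_eq_square algebra_simps)
qed

lemma square_integrable_of_weighted:
  assumes [measurable]: "f \<in> borel_measurable M"
    and weighted: "integrable M (\<lambda>\<omega>. (f \<omega>)\<^sup>2 / (e0 (X \<omega>) * (1 - e0 (X \<omega>))))"
  shows "integrable M (\<lambda>\<omega>. (f \<omega>)\<^sup>2)"
proof (rule Bochner_Integration.integrable_bound[OF weighted])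
  show "AE \<omega> in M. norm ((f \<omega>)\<^sup>2) \<le> norm ((f \<omega>)\<^sup>2 / (e0 (X \<omega>) * (1 - e0 (X \<omega>))))"
    using overlap
  proof eventually_elim
    case (elim \<omega>)
    then have pos: "0 < e0 (X \<omega>) * (1 - e0 (X \<omega>))" and "e0 (X \<omega>) * (1 - e0 (X \<omega>)) \<le> 1"
      by (auto intro: mult_le_one)
    then have "(f \<omega>)\<^sup>2 \<le> (f \<omega>)\<^sup>2 / (e0 (X \<omega>) * (1 - e0 (X \<omega>)))"
      by (simp add: pos_le_divide_eq mult_left_le)
    then show ?case
      using pos by (simp add: abs_of_pos)
  qed
qed simp

lemma
  assumes [measurable]: "g \<in> borel_measurable (MX \<Otimes>\<^sub>M MW)" "k \<in> borel_measurable (MX \<Otimes>\<^sub>M MW)"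
    and g_weighted: "integrable M (\<lambda>\<omega>. e0 (X \<omega>) * (1 - e0 (X \<omega>)) * (g (X \<omega>, W \<omega>))\<^sup>2)"
    and k_square: "integrable M (\<lambda>\<omega>. (k (X \<omega>, W \<omega>))\<^sup>2)"
  shows integrable_treatment_residual_mult_square_integrable:
      "integrable M (\<lambda>\<omega>. (e0 (X \<omega>) - Z \<omega>) * g (X \<omega>, W \<omega>) * k (X \<omega>, W \<omega>))"
    and integral_treatment_residual_mult_square_integrable:
      "(\<integral>\<omega>. (e0 (X \<omega>) - Z \<omega>) * g (X \<omega>, W \<omega>) * k (X \<omega>, W \<omega>) \<partial>M) = 0"
proof -
  have "AE \<omega> in M. norm ((e0 (X \<omega>) * (1 - e0 (X \<omega>)) * g (X \<omega>, W \<omega>))\<^sup>2)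
      \<le> norm (e0 (X \<omega>) * (1 - e0 (X \<omega>)) * (g (X \<omega>, W \<omega>))\<^sup>2)"
    using overlap
  proof eventually_elim
    case (elim \<omega>)
    define c where "c = e0 (X \<omega>) * (1 - e0 (X \<omega>))"
    have "0 \<le> c" "c \<le> 1"
      using elim by (auto simp: c_def intro: mult_le_one)
    then have "c * (c * (g (X \<omega>, W \<omega>))\<^sup>2) \<le> c * (g (X \<omega>, W \<omega>))\<^sup>2"
      by (intro mult_left_le_one_le) auto
    moreover have "(c * g (X \<omega>, W \<omega>))\<^sup>2 = c * (c * (g (X \<omega>, W \<omega>))\<^sup>2)"
      by (simp add: power2_eq_square)
    ultimately show ?case
      using \<open>0 \<le> c\<close> unfolding c_def[symmetric] by simp
  qed
  then have "integrable M (\<lambda>\<omega>. (e0 (X \<omega>) * (1 - e0 (X \<omega>)) * g (X \<omega>, W \<omega>))\<^sup>2)"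
    by (intro Bochner_Integration.integrable_bound[OF g_weighted]) auto
  then have "integrable M (\<lambda>\<omega>. (e0 (X \<omega>) * (1 - e0 (X \<omega>)) * g (X \<omega>, W \<omega>)) * k (X \<omega>, W \<omega>))"
    using k_square by (intro integrable_mult_of_square_integrable) auto
  then show "integrable M (\<lambda>\<omega>. (e0 (X \<omega>) - Z \<omega>) * g (X \<omega>, W \<omega>) * k (X \<omega>, W \<omega>))"
    "(\<integral>\<omega>. (e0 (X \<omega>) - Z \<omega>) * g (X \<omega>, W \<omega>) * k (X \<omega>, W \<omega>) \<partial>M) = 0"
    using integrable_treatment_residual_mult[of "\<lambda>p. g p * k p"] integral_treatment_residual_mult[of "\<lambda>p. g p * k p"]
    by (simp_all add: mult.assoc)
qed

abbreviation sigma_XWZ :: "'w measure" where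
  "sigma_XWZ \<equiv> gen_sigma M (\<lambda>u. (X u, W u, Z u)) (MX \<Otimes>\<^sub>M (MW \<Otimes>\<^sub>M borel))"

lemma measurable_sigma_XWZ:
  shows "X \<in> measurable sigma_XWZ MX" "W \<in> measurable sigma_XWZ MW" "Z \<in> borel_measurable sigma_XWZ"
proof -
  have triple: "(\<lambda>u. (X u, W u, Z u)) \<in> measurable sigma_XWZ (MX \<Otimes>\<^sub>M (MW \<Otimes>\<^sub>M borel))"
    by (rule measurable_gen_sigma) measurable
  show "X \<in> measurable sigma_XWZ MX"
    using measurable_compose[OF triple measurable_fst] by simp
  show "W \<in> measurable sigma_XWZ MW"
    using measurable_compose[OF triple measurable_compose[OF measurable_snd measurable_fst]] by simp
  show "Z \<in> borel_measurable sigma_XWZ"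
    using measurable_compose[OF triple measurable_compose[OF measurable_snd measurable_snd]] by simp
qed

lemma integral_regression_residual_mult:
  assumes Y: "integrable M Y"
    and [measurable]: "h \<in> borel_measurable (MX \<Otimes>\<^sub>M (MW \<Otimes>\<^sub>M borel))"
    and integrable: "integrable M (\<lambda>\<omega>. (Y \<omega> - real_cond_exp M sigma_XWZ Y \<omega>) * h (X \<omega>, W \<omega>, Z \<omega>))"
  shows "(\<integral>\<omega>. (Y \<omega> - real_cond_exp M sigma_XWZ Y \<omega>) * h (X \<omega>, W \<omega>, Z \<omega>) \<partial>M) = 0"
proof -
  interpret sigma_finite_subalgebra M sigma_XWZ
    by (rule sigma_finite_subalgebra_gen_sigma) measurable
  note [measurable] = measurable_sigma_XWZ
  show ?thesis
    using integral_mult_cond_exp_residual[OF Y, of "\<lambda>\<omega>. h (X \<omega>, W \<omega>, Z \<omega>)"] integrable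
    by (simp add: mult.commute)
qed

lemma aipw_regression_decomposition:
  assumes regression: "AE \<omega> in M. real_cond_exp M sigma_XWZ Y \<omega> = Q0 (X \<omega>) (W \<omega>) (Z \<omega>)"
    and correct: "\<forall>z\<in>{0, 1}. AE \<omega> in M. Q (X \<omega>) (W \<omega>) z = Q0 (X \<omega>) (W \<omega>) z"
  shows "AE \<omega> in M. aipw (e0 (X \<omega>)) (Z \<omega>) (Y \<omega>) (Q (X \<omega>) (W \<omega>) 1) (Q (X \<omega>) (W \<omega>) 0) \<tau>
      = (Y \<omega> - real_cond_exp M sigma_XWZ Y \<omega>) * (Z \<omega> / e0 (X \<omega>) - (1 - Z \<omega>) / (1 - e0 (X \<omega>)))
        + (Q (X \<omega>) (W \<omega>) 1 - Q (X \<omega>) (W \<omega>) 0) - \<tau>"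
proof -
  have "AE \<omega> in M. Q (X \<omega>) (W \<omega>) 1 = Q0 (X \<omega>) (W \<omega>) 1"
    "AE \<omega> in M. Q (X \<omega>) (W \<omega>) 0 = Q0 (X \<omega>) (W \<omega>) 0"
    using correct by simp_all
  with regression overlap AE_space show ?thesis
  proof eventually_elim
    case (elim \<omega>)
    then have "e0 (X \<omega>) \<noteq> 0" "e0 (X \<omega>) \<noteq> 1"
      by auto
    with elim Z_binary[of \<omega>] show ?case
      by (auto simp: aipw_residual_form)
  qed
qed

lemma integral_aipw_regression_mult_treatment_residual:
  fixes Y :: "'w \<Rightarrow> real" and Q Q0 :: "'x \<Rightarrow> 'v \<Rightarrow> real \<Rightarrow> real"
  assumes Y: "integrable M Y"
    and regression: "AE \<omega> in M. real_cond_exp M sigma_XWZ Y \<omega> = Q0 (X \<omega>) (W \<omega>) (Z \<omega>)"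
    and correct: "\<forall>z\<in>{0, 1}. AE \<omega> in M. Q (X \<omega>) (W \<omega>) z = Q0 (X \<omega>) (W \<omega>) z"
    and Q_measurable: "\<And>z. (\<lambda>(x, w). Q x w z) \<in> borel_measurable (MX \<Otimes>\<^sub>M MW)"
    and Q_square: "\<And>z. z \<in> {0, 1} \<Longrightarrow> integrable M (\<lambda>\<omega>. (Q (X \<omega>) (W \<omega>) z)\<^sup>2)"
    and [measurable]: "g \<in> borel_measurable (MX \<Otimes>\<^sub>M MW)"
    and g_weighted: "integrable M (\<lambda>\<omega>. e0 (X \<omega>) * (1 - e0 (X \<omega>)) * (g (X \<omega>, W \<omega>))\<^sup>2)"
    and A_square: "integrable M
      (\<lambda>\<omega>. (aipw (e0 (X \<omega>)) (Z \<omega>) (Y \<omega>) (Q (X \<omega>) (W \<omega>) 1) (Q (X \<omega>) (W \<omega>) 0) \<tau>)\<^sup>2)"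
  shows "(\<integral>\<omega>. aipw (e0 (X \<omega>)) (Z \<omega>) (Y \<omega>) (Q (X \<omega>) (W \<omega>) 1) (Q (X \<omega>) (W \<omega>) 0) \<tau>
            * ((e0 (X \<omega>) - Z \<omega>) * g (X \<omega>, W \<omega>)) \<partial>M) = 0"
proof -
  note [measurable] = measurable_case_prod_XW[OF Q_measurable]
  have [measurable]: "Y \<in> borel_measurable M" "real_cond_exp M sigma_XWZ Y \<in> borel_measurable M"
    using Y by (auto intro: borel_measurable_cond_exp2)
  define A where "A \<omega> = aipw (e0 (X \<omega>)) (Z \<omega>) (Y \<omega>) (Q (X \<omega>) (W \<omega>) 1) (Q (X \<omega>) (W \<omega>) 0) \<tau>" for \<omega>
  define D where "D \<omega> = (e0 (X \<omega>) - Z \<omega>) * g (X \<omega>, W \<omega>)" for \<omega>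
  define S where "S p = Q (fst p) (snd p) 1 - Q (fst p) (snd p) 0" for p
  define \<rho> where "\<rho> \<omega> = Z \<omega> / e0 (X \<omega>) - (1 - Z \<omega>) / (1 - e0 (X \<omega>))" for \<omega>
  define R where "R \<omega> = (Y \<omega> - real_cond_exp M sigma_XWZ Y \<omega>) * \<rho> \<omega>" for \<omega>
  have [measurable]: "S \<in> borel_measurable (MX \<Otimes>\<^sub>M MW)"
    unfolding S_def by measurable
  have [measurable]: "A \<in> borel_measurable M" "D \<in> borel_measurable M" "R \<in> borel_measurable M"
    unfolding A_def D_def R_def \<rho>_def aipw_def by measurable
  have decomposition: "AE \<omega> in M. A \<omega> = R \<omega> + S (X \<omega>, W \<omega>) - \<tau>"
    using aipw_regression_decomposition[OF regression correct]
    unfolding A_def R_def \<rho>_def S_def by simp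
  have S_square: "integrable M (\<lambda>\<omega>. (S (X \<omega>, W \<omega>))\<^sup>2)"
    using square_integrable_add[of "\<lambda>\<omega>. Q (X \<omega>) (W \<omega>) 1" M "\<lambda>\<omega>. - Q (X \<omega>) (W \<omega>) 0"] Q_square
    by (simp add: S_def)
  have D_square: "integrable M (\<lambda>\<omega>. (D \<omega>)\<^sup>2)"
    unfolding D_def by (rule square_integrable_treatment_residual) (use g_weighted in simp_all)
  have "integrable M (\<lambda>\<omega>. (A \<omega> + (\<tau> + - S (X \<omega>, W \<omega>)))\<^sup>2)"
    using A_square S_square unfolding A_def[symmetric]
    by (intro square_integrable_add) simp_all
  then have R_square: "integrable M (\<lambda>\<omega>. (R \<omega>)\<^sup>2)"
    by (rule integrable_cong_AE_imp) (use decomposition in \<open>auto elim: eventually_mono\<close>)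
  have RD: "integrable M (\<lambda>\<omega>. R \<omega> * D \<omega>)"
    using R_square D_square by (rule integrable_mult_of_square_integrable[rotated 2]) simp_all
  have SD: "integrable M (\<lambda>\<omega>. D \<omega> * S (X \<omega>, W \<omega>))" "(\<integral>\<omega>. D \<omega> * S (X \<omega>, W \<omega>) \<partial>M) = 0"
    and D: "integrable M (\<lambda>\<omega>. D \<omega> * 1)" "(\<integral>\<omega>. D \<omega> * 1 \<partial>M) = 0"
    unfolding D_def using g_weighted S_square
    by (intro integrable_treatment_residual_mult_square_integrable integral_treatment_residual_mult_square_integrable; simp)+
  have "(\<lambda>(x, w, z). (z / e0 x - (1 - z) / (1 - e0 x)) * ((e0 x - z) * g (x, w)))
      \<in> borel_measurable (MX \<Otimes>\<^sub>M (MW \<Otimes>\<^sub>M borel))"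
    by measurable
  from integral_regression_residual_mult[OF Y this] RD have RD_0: "(\<integral>\<omega>. R \<omega> * D \<omega> \<partial>M) = 0"
    unfolding R_def \<rho>_def D_def by (simp add: ac_simps)
  have "AE \<omega> in M. A \<omega> * D \<omega> = (R \<omega> + S (X \<omega>, W \<omega>) - \<tau>) * D \<omega>"
    using decomposition by (rule eventually_mono) simp
  then have "(\<integral>\<omega>. A \<omega> * D \<omega> \<partial>M) = (\<integral>\<omega>. (R \<omega> + S (X \<omega>, W \<omega>) - \<tau>) * D \<omega> \<partial>M)"
    by (intro integral_cong_AE) auto
  also have "\<dots> = (\<integral>\<omega>. R \<omega> * D \<omega> + D \<omega> * S (X \<omega>, W \<omega>) - \<tau> * D \<omega> \<partial>M)"
    by (simp add: algebra_simps)
  also have "\<dots> = 0"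
    using RD SD D RD_0 by simp
  finally show ?thesis
    unfolding A_def D_def .
qed

lemma weighted_square_integrable_outcome_change:
  fixes p1 q1 p0 q0 :: "'w \<Rightarrow> real"
  assumes [measurable]: "p1 \<in> borel_measurable M" "q1 \<in> borel_measurable M"
    "p0 \<in> borel_measurable M" "q0 \<in> borel_measurable M"
    and "integrable M (\<lambda>\<omega>. (p1 \<omega>)\<^sup>2 / (e0 (X \<omega>) * (1 - e0 (X \<omega>))))"
    "integrable M (\<lambda>\<omega>. (q1 \<omega>)\<^sup>2 / (e0 (X \<omega>) * (1 - e0 (X \<omega>))))"
    "integrable M (\<lambda>\<omega>. (p0 \<omega>)\<^sup>2 / (e0 (X \<omega>) * (1 - e0 (X \<omega>))))"
    "integrable M (\<lambda>\<omega>. (q0 \<omega>)\<^sup>2 / (e0 (X \<omega>) * (1 - e0 (X \<omega>))))"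
  shows "integrable M (\<lambda>\<omega>. e0 (X \<omega>) * (1 - e0 (X \<omega>))
    * ((p1 \<omega> - q1 \<omega>) / e0 (X \<omega>) + (p0 \<omega> - q0 \<omega>) / (1 - e0 (X \<omega>)))\<^sup>2)"
proof (rule Bochner_Integration.integrable_bound)
  show "integrable M (\<lambda>\<omega>. 2 * ((p1 \<omega>)\<^sup>2 + (q1 \<omega>)\<^sup>2 + (p0 \<omega>)\<^sup>2 + (q0 \<omega>)\<^sup>2)
      / (e0 (X \<omega>) * (1 - e0 (X \<omega>))))"
    unfolding times_divide_eq_right[symmetric] add_divide_distrib
    by (intro integrable_mult_right Bochner_Integration.integrable_add) (simp_all add: assms)
  show "AE \<omega> in M. norm (e0 (X \<omega>) * (1 - e0 (X \<omega>))
        * ((p1 \<omega> - q1 \<omega>) / e0 (X \<omega>) + (p0 \<omega> - q0 \<omega>) / (1 - e0 (X \<omega>)))\<^sup>2)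
      \<le> norm (2 * ((p1 \<omega>)\<^sup>2 + (q1 \<omega>)\<^sup>2 + (p0 \<omega>)\<^sup>2 + (q0 \<omega>)\<^sup>2)
        / (e0 (X \<omega>) * (1 - e0 (X \<omega>))))"
    using overlap
  proof eventually_elim
    case (elim \<omega>)
    then have "0 < e0 (X \<omega>) * (1 - e0 (X \<omega>))"
      by simp
    with propensity_weighted_square_diff_le[of "e0 (X \<omega>)" "p1 \<omega>" "q1 \<omega>" "p0 \<omega>" "q0 \<omega>"] elim
    show ?case
      by (simp add: abs_of_pos)
  qed
qed measurable

lemma var_aipw_regression_le:
  fixes Y :: "'w \<Rightarrow> real" and Q Q0 P :: "'x \<Rightarrow> 'v \<Rightarrow> real \<Rightarrow> real"
  assumes [measurable]: "Y \<in> borel_measurable M"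
    and Y_weighted: "integrable M (\<lambda>\<omega>. (Y \<omega>)\<^sup>2 / (e0 (X \<omega>) * (1 - e0 (X \<omega>))))"
    and regression: "AE \<omega> in M. real_cond_exp M sigma_XWZ Y \<omega> = Q0 (X \<omega>) (W \<omega>) (Z \<omega>)"
    and correct: "\<forall>z\<in>{0, 1}. AE \<omega> in M. Q (X \<omega>) (W \<omega>) z = Q0 (X \<omega>) (W \<omega>) z"
    and Q_measurable: "\<And>z. (\<lambda>(x, w). Q x w z) \<in> borel_measurable (MX \<Otimes>\<^sub>M MW)"
    and P_measurable: "\<And>z. (\<lambda>(x, w). P x w z) \<in> borel_measurable (MX \<Otimes>\<^sub>M MW)"
    and Q_weighted: "\<And>z. z \<in> {0, 1} \<Longrightarrow>
      integrable M (\<lambda>\<omega>. (Q (X \<omega>) (W \<omega>) z)\<^sup>2 / (e0 (X \<omega>) * (1 - e0 (X \<omega>))))"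
    and P_weighted: "\<And>z. z \<in> {0, 1} \<Longrightarrow>
      integrable M (\<lambda>\<omega>. (P (X \<omega>) (W \<omega>) z)\<^sup>2 / (e0 (X \<omega>) * (1 - e0 (X \<omega>))))"
  shows "var_rv M (\<lambda>\<omega>. aipw (e0 (X \<omega>)) (Z \<omega>) (Y \<omega>) (Q (X \<omega>) (W \<omega>) 1) (Q (X \<omega>) (W \<omega>) 0) \<tau>)
       \<le> var_rv M (\<lambda>\<omega>. aipw (e0 (X \<omega>)) (Z \<omega>) (Y \<omega>) (P (X \<omega>) (W \<omega>) 1) (P (X \<omega>) (W \<omega>) 0) \<tau>)"
proof -
  note [measurable] = measurable_case_prod_XW[OF Q_measurable] measurable_case_prod_XW[OF P_measurable]
  have "integrable M (\<lambda>\<omega>. (Y \<omega>)\<^sup>2)"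
    using Y_weighted by (rule square_integrable_of_weighted[rotated]) measurable
  then have Y: "integrable M Y"
    by (rule square_integrable_imp_integrable[rotated]) measurable
  define g where "g p = (P (fst p) (snd p) 1 - Q (fst p) (snd p) 1) / e0 (fst p)
    + (P (fst p) (snd p) 0 - Q (fst p) (snd p) 0) / (1 - e0 (fst p))" for p
  have [measurable]: "g \<in> borel_measurable (MX \<Otimes>\<^sub>M MW)"
    unfolding g_def by measurable
  have change: "(\<lambda>\<omega>. aipw (e0 (X \<omega>)) (Z \<omega>) (Y \<omega>) (P (X \<omega>) (W \<omega>) 1) (P (X \<omega>) (W \<omega>) 0) \<tau>)
    = (\<lambda>\<omega>. aipw (e0 (X \<omega>)) (Z \<omega>) (Y \<omega>) (Q (X \<omega>) (W \<omega>) 1) (Q (X \<omega>) (W \<omega>) 0) \<tau>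
        + (e0 (X \<omega>) - Z \<omega>) * g (X \<omega>, W \<omega>))"
    unfolding g_def fst_conv snd_conv by (intro ext aipw_change_outcome)
  have g_weighted: "integrable M (\<lambda>\<omega>. e0 (X \<omega>) * (1 - e0 (X \<omega>)) * (g (X \<omega>, W \<omega>))\<^sup>2)"
    unfolding g_def fst_conv snd_conv using P_weighted Q_weighted
    by (intro weighted_square_integrable_outcome_change) auto
  show ?thesis
    unfolding change
  proof (rule var_rv_le_add_orthogonal)
    show "integrable M (\<lambda>\<omega>. ((e0 (X \<omega>) - Z \<omega>) * g (X \<omega>, W \<omega>))\<^sup>2)"
      using g_weighted by (intro square_integrable_treatment_residual) auto
    show "(\<integral>\<omega>. (e0 (X \<omega>) - Z \<omega>) * g (X \<omega>, W \<omega>) \<partial>M) = 0"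
      using integral_treatment_residual_mult_square_integrable[of g "\<lambda>_. 1"] g_weighted by simp
    show "(\<integral>\<omega>. aipw (e0 (X \<omega>)) (Z \<omega>) (Y \<omega>) (Q (X \<omega>) (W \<omega>) 1) (Q (X \<omega>) (W \<omega>) 0) \<tau>
        * ((e0 (X \<omega>) - Z \<omega>) * g (X \<omega>, W \<omega>)) \<partial>M) = 0"
      if "integrable M
        (\<lambda>\<omega>. (aipw (e0 (X \<omega>)) (Z \<omega>) (Y \<omega>) (Q (X \<omega>) (W \<omega>) 1) (Q (X \<omega>) (W \<omega>) 0) \<tau>)\<^sup>2)"
      using Y regression correct Q_measurable _ _ g_weighted that
    proof (rule integral_aipw_regression_mult_treatment_residual)
      show "integrable M (\<lambda>\<omega>. (Q (X \<omega>) (W \<omega>) z)\<^sup>2)" if "z \<in> {0, 1}" for z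
        using Q_weighted[OF that] by (rule square_integrable_of_weighted[rotated]) measurable
    qed measurable
  qed (unfold aipw_def, measurable)
qed

end

lemma treatment_modelI:
  assumes "prob_space M" "X \<in> measurable M MX" "W \<in> measurable M MW" "Z \<in> borel_measurable M"
    "e0 \<in> borel_measurable MX" "\<And>\<omega>. \<omega> \<in> space M \<Longrightarrow> Z \<omega> = 0 \<or> Z \<omega> = 1"
    "AE \<omega> in M. real_cond_exp M (gen_sigma M X MX) Z \<omega> = e0 (X \<omega>)"
    "AE \<omega> in M. 0 < e0 (X \<omega>) \<and> e0 (X \<omega>) < 1"
    and "cond_indep M X MX Z borel (\<lambda>\<omega>. (W \<omega>, R \<omega>)) (MW \<Otimes>\<^sub>M MR)" "R \<in> measurable M MR"
  shows "treatment_model M X MX W MW Z e0"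
  using assms(1-8) cond_indep_fst[OF assms(9,10)]
  by (intro treatment_model.intro treatment_model_axioms.intro)

theorem theorem2:
  fixes M :: "'w measure"
    and Y Z Y0 Y1 :: "'w \<Rightarrow> real"
    and X :: "'w \<Rightarrow> 'x" and MX :: "'x measure"
    and W :: "'w \<Rightarrow> 'v" and MW :: "'v measure"
    and e0 :: "'x \<Rightarrow> real"
    and eX :: "'x \<Rightarrow> 'pa \<Rightarrow> real"
    and eW :: "'x \<Rightarrow> 'v \<Rightarrow> 'pa \<Rightarrow> 'pg::zero \<Rightarrow> real"
    and \<alpha>s :: 'pa and \<gamma>s :: 'pg
    and QX :: "'x \<Rightarrow> real \<Rightarrow> 'pb \<Rightarrow> real"
    and QW :: "'x \<Rightarrow> 'v \<Rightarrow> real \<Rightarrow> 'pd \<Rightarrow> real"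
    and Q0 :: "'x \<Rightarrow> 'v \<Rightarrow> real \<Rightarrow> real"
    and \<tau> :: real
    and \<beta>fps :: 'pb and \<delta>fps :: 'pd
  assumes M: "prob_space M"
    and meas_X: "X \<in> measurable M MX"
    and meas_W: "W \<in> measurable M MW"
    and meas_Z: "Z \<in> borel_measurable M"
    and meas_Y0: "Y0 \<in> borel_measurable M"
    and meas_Y1: "Y1 \<in> borel_measurable M"
    and Z_bin: "\<And>\<omega>. \<omega> \<in> space M \<Longrightarrow> Z \<omega> = 0 \<or> Z \<omega> = 1"
    and Y_def: "\<And>\<omega>. \<omega> \<in> space M \<Longrightarrow> Y \<omega> = Z \<omega> * Y1 \<omega> + (1 - Z \<omega>) * Y0 \<omega>"
    and int_Y0: "integrable M Y0" and int_Y1: "integrable M Y1"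
    and tau_def: "\<tau> = (\<integral>\<omega>. Y1 \<omega> - Y0 \<omega> \<partial>M)"
    \<comment> \<open>propensity score e0(X) = Pr(Z = 1 | X)\<close>
    and meas_e0: "e0 \<in> borel_measurable MX"
    and e0_def: "AE \<omega> in M. real_cond_exp M (gen_sigma M X MX) Z \<omega> = e0 (X \<omega>)"
    \<comment> \<open>Assumption 1\<close>
    and A1_indep: "cond_indep M X MX Z borel (\<lambda>\<omega>. (Y0 \<omega>, Y1 \<omega>)) (borel \<Otimes>\<^sub>M borel)"
    and A1_overlap: "AE \<omega> in M. 0 < e0 (X \<omega>) \<and> e0 (X \<omega>) < 1"
    \<comment> \<open>Assumption 2\<close>
    and A2: "cond_indep M X MX Z borel (\<lambda>\<omega>. (W \<omega>, Y0 \<omega>, Y1 \<omega>)) (MW \<Otimes>\<^sub>M (borel \<Otimes>\<^sub>M borel))"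
    \<comment> \<open>propensity models, nested, and propensity score fully known\<close>
    and eW_nest: "\<And>x w \<alpha>. eW x w \<alpha> 0 = eX x \<alpha>"
    and ps_known: "AE \<omega> in M. e0 (X \<omega>) = eX (X \<omega>) \<alpha>s \<and> eX (X \<omega>) \<alpha>s = eW (X \<omega>) (W \<omega>) \<alpha>s \<gamma>s"
    \<comment> \<open>Q0(X,W,z) = E(Y | X, W, Z = z)\<close>
    and meas_Q0: "\<And>z. (\<lambda>(x, w). Q0 x w z) \<in> borel_measurable (MX \<Otimes>\<^sub>M MW)"
    and Q0_def: "AE \<omega> in M. real_cond_exp M
                   (gen_sigma M (\<lambda>u. (X u, W u, Z u)) (MX \<Otimes>\<^sub>M (MW \<Otimes>\<^sub>M borel))) Y \<omega>
                 = Q0 (X \<omega>) (W \<omega>) (Z \<omega>)"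
    \<comment> \<open>regularity of the working models (finiteness of the variances)\<close>
    and meas_QX: "\<And>z \<beta>. (\<lambda>x. QX x z \<beta>) \<in> borel_measurable MX"
    and meas_QW: "\<And>z \<delta>. (\<lambda>(x, w). QW x w z \<delta>) \<in> borel_measurable (MX \<Otimes>\<^sub>M MW)"
    and L2_Y: "integrable M (\<lambda>\<omega>. (Y \<omega>)\<^sup>2 / (e0 (X \<omega>) * (1 - e0 (X \<omega>))))"
    and L2_QX: "\<And>z \<beta>. z \<in> {0, 1} \<Longrightarrow>
                 integrable M (\<lambda>\<omega>. (QX (X \<omega>) z \<beta>)\<^sup>2 / (e0 (X \<omega>) * (1 - e0 (X \<omega>))))"
    and L2_QW: "\<And>z \<delta>. z \<in> {0, 1} \<Longrightarrow>
                 integrable M (\<lambda>\<omega>. (QW (X \<omega>) (W \<omega>) z \<delta>)\<^sup>2 / (e0 (X \<omega>) * (1 - e0 (X \<omega>))))"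
    \<comment> \<open>Assumption 3\<close>
    and A3: "(\<forall>\<beta>. \<exists>\<delta>. \<forall>x w z. QW x w z \<delta> = QX x z \<beta>)
             \<or> (\<exists>\<delta>0. \<forall>z\<in>{0, 1}. AE \<omega> in M. QW (X \<omega>) (W \<omega>) z \<delta>0 = Q0 (X \<omega>) (W \<omega>) z)"
    \<comment> \<open>beta_fps, delta_fps minimise the asymptotic variances\<close>
    and \<beta>fps_min: "\<And>\<beta>. var_rv M (\<lambda>\<omega>. aipw (e0 (X \<omega>)) (Z \<omega>) (Y \<omega>) (QX (X \<omega>) 1 \<beta>fps) (QX (X \<omega>) 0 \<beta>fps) \<tau>)
                      \<le> var_rv M (\<lambda>\<omega>. aipw (e0 (X \<omega>)) (Z \<omega>) (Y \<omega>) (QX (X \<omega>) 1 \<beta>) (QX (X \<omega>) 0 \<beta>) \<tau>)"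
    and \<delta>fps_min: "\<And>\<delta>. var_rv M (\<lambda>\<omega>. aipw (e0 (X \<omega>)) (Z \<omega>) (Y \<omega>) (QW (X \<omega>) (W \<omega>) 1 \<delta>fps) (QW (X \<omega>) (W \<omega>) 0 \<delta>fps) \<tau>)
                      \<le> var_rv M (\<lambda>\<omega>. aipw (e0 (X \<omega>)) (Z \<omega>) (Y \<omega>) (QW (X \<omega>) (W \<omega>) 1 \<delta>) (QW (X \<omega>) (W \<omega>) 0 \<delta>) \<tau>)"
  shows "var_rv M (\<lambda>\<omega>. aipw (e0 (X \<omega>)) (Z \<omega>) (Y \<omega>) (QW (X \<omega>) (W \<omega>) 1 \<delta>fps) (QW (X \<omega>) (W \<omega>) 0 \<delta>fps) \<tau>)
         \<le> var_rv M (\<lambda>\<omega>. aipw (e0 (X \<omega>)) (Z \<omega>) (Y \<omega>) (QX (X \<omega>) 1 \<beta>fps) (QX (X \<omega>) 0 \<beta>fps) \<tau>)"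
proof -
  (* eW_nest and ps_known only say that both influence functions use the true score e0, which
     the statement already builds in. *)
  have "(\<lambda>\<omega>. Z \<omega> * Y1 \<omega> + (1 - Z \<omega>) * Y0 \<omega>) \<in> borel_measurable M"
    using meas_Z meas_Y0 meas_Y1 by measurable
  then have [measurable]: "Y \<in> borel_measurable M"
    using measurable_cong[of M Y "\<lambda>\<omega>. Z \<omega> * Y1 \<omega> + (1 - Z \<omega>) * Y0 \<omega>"] Y_def by blast
  interpret treatment_model M X MX W MW Z e0
    using meas_Y0 meas_Y1
    by (intro treatment_modelI[OF M meas_X meas_W meas_Z meas_e0 Z_bin e0_def A1_overlap A2]) measurable
  from A3 show ?thesis
  proof
    assume "\<forall>\<beta>. \<exists>\<delta>. \<forall>x w z. QW x w z \<delta> = QX x z \<beta>"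
    then obtain \<delta> where "\<forall>x w z. QW x w z \<delta> = QX x z \<beta>fps"
      by blast
    with \<delta>fps_min[of \<delta>] show ?thesis
      by simp
  next
    assume "\<exists>\<delta>0. \<forall>z\<in>{0, 1}. AE \<omega> in M. QW (X \<omega>) (W \<omega>) z \<delta>0 = Q0 (X \<omega>) (W \<omega>) z"
    then obtain \<delta>0 where correct: "\<forall>z\<in>{0, 1}. AE \<omega> in M. QW (X \<omega>) (W \<omega>) z \<delta>0 = Q0 (X \<omega>) (W \<omega>) z"
      by blast
    have "var_rv M (\<lambda>\<omega>. aipw (e0 (X \<omega>)) (Z \<omega>) (Y \<omega>) (QW (X \<omega>) (W \<omega>) 1 \<delta>0) (QW (X \<omega>) (W \<omega>) 0 \<delta>0) \<tau>)
        \<le> var_rv M (\<lambda>\<omega>. aipw (e0 (X \<omega>)) (Z \<omega>) (Y \<omega>) (QX (X \<omega>) 1 \<beta>fps) (QX (X \<omega>) 0 \<beta>fps) \<tau>)"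
      using L2_Y Q0_def correct meas_QW L2_QW L2_QX
      by (intro var_aipw_regression_le[where P = "\<lambda>x w z. QX x z \<beta>fps"])
        (auto simp: case_prod_beta' intro: measurable_compose[OF measurable_fst meas_QX])
    with \<delta>fps_min[of \<delta>0] show ?thesis
      by linarith
  qed
qed

end
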